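(* Let $a\ge b\ge k$ be positive integers. Then $\operatorname{Im}(\gamma_k)\subseteq\operatorname{Im}(\theta_1)$, where $\theta_1:\Lambda^{a+1}\otimes\Lambda^{b-1}\to\Lambda^a\otimes\Lambda^b$.
   Context: $K$ is a field of characteristic zero, $G=GL(n,K)$, $V=K^n$, $\Lambda=\bigoplus_i\Lambda^i$ the exterior algebra of $V$. $m$ is multiplication (also written by juxtaposition) and $\Delta_{s,t}:\Lambda^{s+t}\to\Lambda^s\otimes\Lambda^t$ the comultiplication component $v_1\cdots v_{s+t}\mapsto\sum_\sigma\mathrm{sgn}(\sigma)v_{\sigma(1)}\cdots v_{\sigma(s)}\otimes v_{\sigma(s+1)}\cdots v_{\sigma(s+t)}$ (permutations increasing on the first $s$ and last $t$ positions). $\theta_1=(1\otimes m)\circ(\Delta_{a,1}\otimes1):\Lambda^{a+1}\otimes\Lambda^{b-1}\to\Lambda^a\otimes\Lambda^b$. $\beta_k:\Lambda^a\otimes\Lambda^k\otimes\Lambda^{b-k}\to\Lambda^a\otimes\Lambda^b$ is $(m\otimes m)\circ(1\otimes\tau\otimes1)\circ(\Delta_{a-k,k}\otimes1)$ with $\tau(w\otimes z)=z\otimes w$ on $\Lambda^k\otimes\Lambda^k$, and $\gamma_k(x\otimes y\otimes z)=x\otimes yz-\beta_k(x\otimes y\otimes z)$. *)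

theory Defs
  imports Main
begin

text \<open>V = K^n with basis e_0,...,e_(n-1). The exterior power
Lambda^d has basis e_S (S a d-subset of {0..<n}, e_S = product of e_i, i in S,
in increasing order). Elements of Lambda^a (x) Lambda^b are coefficient functions
on pairs (S,T) of basis index sets; similarly for triple tensors.\<close>

definition ext_basis :: "nat \<Rightarrow> nat \<Rightarrow> nat set set" where
  "ext_basis n d = {S. S \<subseteq> {0..<n} \<and> card S = d}"

definition tensor2 :: "nat \<Rightarrow> nat \<Rightarrow> nat \<Rightarrow> (nat set \<times> nat set \<Rightarrow> 'k::field) set" where
  "tensor2 n a b = {x. \<forall>P Q. x (P, Q) \<noteq> 0 \<longrightarrow> P \<in> ext_basis n a \<and> Q \<in> ext_basis n b}"

definition tensor3 :: "nat \<Rightarrow> nat \<Rightarrow> nat \<Rightarrow> nat \<Rightarrow> (nat set \<times> nat set \<times> nat set \<Rightarrow> 'k::field) set" where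
  "tensor3 n a b c = {x. \<forall>P Q R. x (P, Q, R) \<noteq> 0 \<longrightarrow>
      P \<in> ext_basis n a \<and> Q \<in> ext_basis n b \<and> R \<in> ext_basis n c}"

text \<open>Sign of the shuffle putting the (sorted) indices of A before those of B.\<close>
definition wsign :: "nat set \<Rightarrow> nat set \<Rightarrow> 'k::field" where
  "wsign A B = (-1) ^ card {(x, y). x \<in> A \<and> y \<in> B \<and> y < x}"

text \<open>Product e_S e_T in Lambda, as coefficient function.\<close>
definition wedge_b :: "nat set \<Rightarrow> nat set \<Rightarrow> nat set \<Rightarrow> 'k::field" where
  "wedge_b S T R = (if S \<inter> T = {} \<and> R = S \<union> T then wsign S T else 0)"

text \<open>Comultiplication component Delta_(s,t)(e_S) as coefficient function.\<close>
definition comult_b :: "nat \<Rightarrow> nat \<Rightarrow> nat set \<Rightarrow> nat set \<times> nat set \<Rightarrow> 'k::field" where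
  "comult_b s t S = (\<lambda>(A, B). if A \<subseteq> S \<and> card A = s \<and> B = S - A \<and> card B = t
      then wsign A B else 0)"

text \<open>theta_1 = (1 (x) m) o (Delta_(a,1) (x) 1) on the basis tensor e_S (x) e_T.\<close>
definition theta1_b :: "nat \<Rightarrow> nat set \<Rightarrow> nat set \<Rightarrow> nat set \<times> nat set \<Rightarrow> 'k::field" where
  "theta1_b a S T = (\<lambda>(P, Q). \<Sum>B\<in>Pow S. comult_b a 1 S (P, B) * wedge_b B T Q)"

definition theta1 :: "nat \<Rightarrow> nat \<Rightarrow> nat \<Rightarrow> (nat set \<times> nat set \<Rightarrow> 'k::field)
    \<Rightarrow> (nat set \<times> nat set \<Rightarrow> 'k)" where
  "theta1 n a b x = (\<lambda>PQ. \<Sum>S\<in>ext_basis n (a + 1). \<Sum>T\<in>ext_basis n (b - 1).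
      x (S, T) * theta1_b a S T PQ)"

text \<open>beta_k = (m (x) m) o (1 (x) tau (x) 1) o (Delta_(a-k,k) (x) 1) on e_S (x) e_Y (x) e_Z.\<close>
definition beta_b :: "nat \<Rightarrow> nat \<Rightarrow> nat set \<Rightarrow> nat set \<Rightarrow> nat set \<Rightarrow> nat set \<times> nat set \<Rightarrow> 'k::field" where
  "beta_b a k S Y Z = (\<lambda>(P, Q). \<Sum>A\<in>Pow S. \<Sum>B\<in>Pow S.
      comult_b (a - k) k S (A, B) * wedge_b A Y P * wedge_b B Z Q)"

text \<open>gamma_k(x (x) y (x) z) = x (x) yz - beta_k(x (x) y (x) z) on basis tensors.\<close>
definition gamma_b :: "nat \<Rightarrow> nat \<Rightarrow> nat set \<Rightarrow> nat set \<Rightarrow> nat set \<Rightarrow> nat set \<times> nat set \<Rightarrow> 'k::field" where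
  "gamma_b a k S Y Z = (\<lambda>(P, Q). (if P = S then wedge_b Y Z Q else 0) - beta_b a k S Y Z (P, Q))"

definition gamma :: "nat \<Rightarrow> nat \<Rightarrow> nat \<Rightarrow> nat \<Rightarrow> (nat set \<times> nat set \<times> nat set \<Rightarrow> 'k::field)
    \<Rightarrow> (nat set \<times> nat set \<Rightarrow> 'k)" where
  "gamma n a b k x = (\<lambda>PQ. \<Sum>S\<in>ext_basis n a. \<Sum>Y\<in>ext_basis n k. \<Sum>Z\<in>ext_basis n (b - k).
      x (S, Y, Z) * gamma_b a k S Y Z PQ)"

end

theory Submission
  imports Defs
begin

(* For basis vectors e_S, e_Y, e_Z let W(i, j) be the signed sum of the basis tensors
   e_((S - A) \<union> C) \<otimes> e_(A \<union> (Y - C) \<union> Z) obtained by moving an i-subset A of S to the right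
   factor and a j-subset C of Y to the left one. Then W(0, 0) = e_S \<otimes> e_Y e_Z and
   W(k, k) = \<beta>_k (e_S \<otimes> e_Y \<otimes> e_Z).
   Applying \<theta>_1 to W(i, i + 1) moves one more element u to the right. If u comes from S, the
   result is, up to the sign (-1)^(i + 1), a term of W(i + 1, i + 1) with a marked element
   u \<in> A - C; if u comes from C, it is, up to (-1)^i, a term of W(i, i) with a marked element
   u \<in> Y - C outside S. The remaining marked terms (u \<in> A \<inter> C, resp. u \<in> (Y - C) \<inter> S) match
   bijectively with equal signs, and counting marks gives
     \<theta>_1 W(i, i + 1) = (-1)^i ((k - i) W(i, i) - (i + 1) W(i + 1, i + 1)).
   Since (k - i) binom(k, i) = (i + 1) binom(k, i + 1), the sum of the elements
   (-1)^i W(i, i + 1) / ((k - i) binom(k, i)) over i < k is mapped by \<theta>_1 to the telescoping sum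
   W(0, 0) - W(k, k) = \<gamma>_k (e_S \<otimes> e_Y \<otimes> e_Z). *)

section \<open>Inversion counts\<close>

definition inversions :: "nat set \<Rightarrow> nat set \<Rightarrow> nat" where
  "inversions A B = card {(x, y). x \<in> A \<and> y \<in> B \<and> y < x}"

lemma wsign_inversions: "wsign A B = (-1) ^ inversions A B"
  by (simp add: wsign_def inversions_def)

lemma inversions_empty [simp]: "inversions {} B = 0" "inversions A {} = 0"
  by (simp_all add: inversions_def)

lemma finite_inversion_pairs:
  "finite A \<Longrightarrow> finite B \<Longrightarrow> finite {(x, y). x \<in> A \<and> y \<in> B \<and> y < x}"
  by (rule finite_subset[of _ "A \<times> B"]) auto

lemma inversions_Un_left:
  assumes "finite A" "finite B" "finite C" "A \<inter> B = {}"
  shows "inversions (A \<union> B) C = inversions A C + inversions B C"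
proof -
  have "{(x, y). x \<in> A \<union> B \<and> y \<in> C \<and> y < x} =
        {(x, y). x \<in> A \<and> y \<in> C \<and> y < x} \<union> {(x, y). x \<in> B \<and> y \<in> C \<and> y < x}" by auto
  moreover have "{(x, y). x \<in> A \<and> y \<in> C \<and> y < x} \<inter> {(x, y). x \<in> B \<and> y \<in> C \<and> y < x} = {}"
    using assms(4) by auto
  ultimately show ?thesis
    unfolding inversions_def by (simp add: card_Un_disjoint finite_inversion_pairs assms)
qed

lemma inversions_Un_right:
  assumes "finite A" "finite B" "finite C" "B \<inter> C = {}"
  shows "inversions A (B \<union> C) = inversions A B + inversions A C"
proof -
  have "{(x, y). x \<in> A \<and> y \<in> B \<union> C \<and> y < x} =
        {(x, y). x \<in> A \<and> y \<in> B \<and> y < x} \<union> {(x, y). x \<in> A \<and> y \<in> C \<and> y < x}" by auto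
  moreover have "{(x, y). x \<in> A \<and> y \<in> B \<and> y < x} \<inter> {(x, y). x \<in> A \<and> y \<in> C \<and> y < x} = {}"
    using assms(4) by auto
  ultimately show ?thesis
    unfolding inversions_def by (simp add: card_Un_disjoint finite_inversion_pairs assms)
qed

lemma inversions_insert_left:
  "finite A \<Longrightarrow> finite B \<Longrightarrow> u \<notin> A \<Longrightarrow> inversions (insert u A) B = inversions {u} B + inversions A B"
  using inversions_Un_left[of "{u}" A B] by simp

lemma inversions_insert_right:
  "finite A \<Longrightarrow> finite B \<Longrightarrow> u \<notin> B \<Longrightarrow> inversions A (insert u B) = inversions A {u} + inversions A B"
  using inversions_Un_right[of A "{u}" B] by simp

lemma inversions_add_swap:
  assumes "finite A" "finite B" "A \<inter> B = {}"
  shows "inversions A B + inversions B A = card A * card B"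
proof -
  let ?X = "{(x, y). x \<in> A \<and> y \<in> B \<and> y < x}"
  let ?Y = "{(x, y). x \<in> A \<and> y \<in> B \<and> x < y}"
  have "A \<times> B = ?X \<union> ?Y" using assms(3) by (auto simp: linorder_neq_iff)
  moreover have "?X \<inter> ?Y = {}" by auto
  moreover have "finite ?Y" by (rule finite_subset[of _ "A \<times> B"]) (auto simp: assms)
  ultimately have "card A * card B = card ?X + card ?Y"
    by (simp add: card_cartesian_product[symmetric] card_Un_disjoint finite_inversion_pairs assms)
  moreover have "card ?Y = inversions B A"
    unfolding inversions_def
    by (rule bij_betw_same_card[of "\<lambda>(x, y). (y, x)"]) (auto simp: bij_betw_def inj_on_def image_iff)
  ultimately show ?thesis by (simp add: inversions_def)
qed

lemma inversions_singleton_swap: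
  "finite A \<Longrightarrow> u \<notin> A \<Longrightarrow> inversions {u} A + inversions A {u} = card A"
  using inversions_add_swap[of "{u}" A] by simp

lemma minus_one_power_parity_eq: "even m \<longleftrightarrow> even n \<Longrightarrow> (-1 :: 'a::ring_1) ^ m = (-1) ^ n"
  by (simp add: minus_one_power_iff)

section \<open>Formal linear combinations\<close>

definition lincomb :: "'i set \<Rightarrow> ('i \<Rightarrow> 'k::comm_monoid_add) \<Rightarrow> ('i \<Rightarrow> 'p) \<Rightarrow> 'p \<Rightarrow> 'k" where
  "lincomb I c f p = (\<Sum>i\<in>I. if f i = p then c i else 0)"

lemma lincomb_cong:
  "I = J \<Longrightarrow> (\<And>i. i \<in> J \<Longrightarrow> c i = c' i) \<Longrightarrow> (\<And>i. i \<in> J \<Longrightarrow> f i = f' i) \<Longrightarrow> lincomb I c f = lincomb J c' f'"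
  unfolding lincomb_def by (intro ext sum.cong) auto

lemma lincomb_reindex:
  assumes "bij_betw h I J" "\<And>i. i \<in> I \<Longrightarrow> c i = c' (h i)" "\<And>i. i \<in> I \<Longrightarrow> f i = f' (h i)"
  shows "lincomb I c f = lincomb J c' f'"
proof
  fix p
  have "lincomb J c' f' p = (\<Sum>i\<in>I. if f' (h i) = p then c' (h i) else 0)"
    unfolding lincomb_def using sum.reindex_bij_betw[OF assms(1), of "\<lambda>j. if f' j = p then c' j else 0"]
    by simp
  also have "\<dots> = lincomb I c f p" unfolding lincomb_def by (rule sum.cong) (auto simp: assms)
  finally show "lincomb I c f p = lincomb J c' f' p" by simp
qed

lemma lincomb_Un_disjoint:
  "finite I \<Longrightarrow> finite J \<Longrightarrow> I \<inter> J = {} \<Longrightarrow> lincomb (I \<union> J) c f p = lincomb I c f p + lincomb J c f p"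
  unfolding lincomb_def by (rule sum.union_disjoint)

lemma mult_lincomb: "(r :: 'k::semiring_0) * lincomb I c f p = lincomb I (\<lambda>i. r * c i) f p"
  unfolding lincomb_def by (simp add: sum_distrib_left if_distrib cong: if_cong)

lemma lincomb_Sigma:
  assumes "finite I" "\<And>i. i \<in> I \<Longrightarrow> finite (B i)"
  shows "lincomb (Sigma I B) c f p = (\<Sum>i\<in>I. lincomb (B i) (\<lambda>u. c (i, u)) (\<lambda>u. f (i, u)) p)"
  unfolding lincomb_def using assms by (subst sum.Sigma) (auto simp: case_prod_eta)

lemma lincomb_Sigma_fst:
  fixes c :: "'i \<Rightarrow> 'k::semiring_1"
  assumes "finite I" "\<And>i. i \<in> I \<Longrightarrow> finite (B i)"
  shows "lincomb (Sigma I B) (\<lambda>x. c (fst x)) (\<lambda>x. f (fst x)) p = lincomb I (\<lambda>i. of_nat (card (B i)) * c i) f p"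
proof -
  have "lincomb (Sigma I B) (\<lambda>x. c (fst x)) (\<lambda>x. f (fst x)) p = (\<Sum>i\<in>I. lincomb (B i) (\<lambda>u. c i) (\<lambda>u. f i) p)"
    using lincomb_Sigma[OF assms, where c="\<lambda>x. c (fst x)" and f="\<lambda>x. f (fst x)" and p=p] by simp
  also have "\<dots> = lincomb I (\<lambda>i. of_nat (card (B i)) * c i) f p"
    unfolding lincomb_def by (rule sum.cong) auto
  finally show ?thesis .
qed

lemma lincomb_nonzero_imp_target:
  "lincomb I c f p \<noteq> 0 \<Longrightarrow> \<exists>i\<in>I. f i = p"
  unfolding lincomb_def by (erule contrapos_np) (auto intro!: sum.neutral)

section \<open>Basis computations in the exterior algebra\<close>

lemma ext_basis_finite: "finite (ext_basis n d)"
  unfolding ext_basis_def by (rule finite_subset[of _ "Pow {0..<n}"]) auto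

lemma ext_basisD: "S \<in> ext_basis n d \<Longrightarrow> finite S \<and> S \<subseteq> {0..<n} \<and> card S = d"
  unfolding ext_basis_def by (auto intro: finite_subset[OF _ finite_atLeastLessThan])

lemma comult_b_eq:
  assumes "B \<subseteq> S"
  shows "comult_b s t S (A, B) = (if A = S - B \<and> card A = s \<and> card B = t then wsign A B else 0)"
proof (cases "A = S - B")
  case True
  moreover have "S - (S - B) = B" using assms by blast
  ultimately show ?thesis by (simp add: comult_b_def)
next
  case False
  then have "\<not> (A \<subseteq> S \<and> B = S - A)" using assms by blast
  with False show ?thesis by (auto simp: comult_b_def)
qed

lemma theta1_sum:
  "finite I \<Longrightarrow> theta1 n a b (\<lambda>p. \<Sum>i\<in>I. g i p) PQ = (\<Sum>i\<in>I. theta1 n a b (g i) PQ)"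
  unfolding theta1_def by (simp add: sum_distrib_right sum.swap[of _ I])

lemma theta1_scale: "theta1 n a b (\<lambda>p. c * g p) PQ = c * theta1 n a b g PQ"
  unfolding theta1_def by (simp add: sum_distrib_left mult.assoc)

lemma theta1_lincomb:
  assumes "finite I" "\<And>i. i \<in> I \<Longrightarrow> f i \<in> ext_basis n (a + 1) \<times> ext_basis n (b - 1)"
  shows "theta1 n a b (lincomb I c f) PQ = (\<Sum>i\<in>I. c i * theta1_b a (fst (f i)) (snd (f i)) PQ)"
proof -
  let ?B = "ext_basis n (a + 1) \<times> ext_basis n (b - 1)"
  have "theta1 n a b (lincomb I c f) PQ = (\<Sum>ST\<in>?B. lincomb I c f ST * theta1_b a (fst ST) (snd ST) PQ)"
    unfolding theta1_def sum.cartesian_product by (simp add: case_prod_beta)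
  also have "\<dots> = (\<Sum>ST\<in>?B. \<Sum>i\<in>I. if f i = ST then c i * theta1_b a (fst ST) (snd ST) PQ else 0)"
    unfolding lincomb_def sum_distrib_right by (intro sum.cong) auto
  also have "\<dots> = (\<Sum>i\<in>I. \<Sum>ST\<in>?B. if f i = ST then c i * theta1_b a (fst ST) (snd ST) PQ else 0)"
    by (rule sum.swap)
  also have "\<dots> = (\<Sum>i\<in>I. c i * theta1_b a (fst (f i)) (snd (f i)) PQ)"
    using assms(2) by (intro sum.cong) (auto simp: sum.delta ext_basis_finite)
  finally show ?thesis .
qed

lemma theta1_b_lincomb:
  assumes "finite U" "card U = a + 1"
  shows "theta1_b a U T PQ
    = lincomb (U - T) (\<lambda>u. wsign (U - {u}) {u} * wsign {u} T) (\<lambda>u. (U - {u}, insert u T)) PQ"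
proof -
  obtain P Q where PQ: "PQ = (P, Q)" by fastforce
  let ?g = "\<lambda>B. comult_b a 1 U (P, B) * wedge_b B T Q"
  have "theta1_b a U T PQ = sum ?g (Pow U)" by (simp add: theta1_b_def PQ)
  also have "\<dots> = sum ?g ((\<lambda>u. {u}) ` U)"
    by (rule sum.mono_neutral_right) (auto simp: assms comult_b_def card_1_singleton_iff)
  also have "\<dots> = (\<Sum>u\<in>U. ?g {u})" by (subst sum.reindex) (auto simp: inj_on_def)
  also have "\<dots> = (\<Sum>u\<in>U. if u \<notin> T \<and> (U - {u}, insert u T) = (P, Q)
      then wsign (U - {u}) {u} * wsign {u} T else 0)"
  proof (rule sum.cong)
    fix u assume u: "u \<in> U"
    have "(P \<subseteq> U \<and> {u} = U - P) \<longleftrightarrow> P = U - {u}" using u by blast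
    then show "?g {u} = (if u \<notin> T \<and> (U - {u}, insert u T) = (P, Q)
        then wsign (U - {u}) {u} * wsign {u} T else 0)"
      using assms u by (auto simp: comult_b_def wedge_b_def)
  qed simp
  also have "\<dots> = lincomb (U - T) (\<lambda>u. wsign (U - {u}) {u} * wsign {u} T) (\<lambda>u. (U - {u}, insert u T)) PQ"
    unfolding lincomb_def PQ by (rule sum.mono_neutral_cong_right) (auto simp: assms)
  finally show ?thesis .
qed

lemma tensor2_sum: "finite I \<Longrightarrow> (\<And>i. i \<in> I \<Longrightarrow> g i \<in> tensor2 n a b) \<Longrightarrow> (\<lambda>p. \<Sum>i\<in>I. g i p) \<in> tensor2 n a b"
  unfolding tensor2_def by (auto elim: sum.not_neutral_contains_not_neutral)

lemma tensor2_scale: "g \<in> tensor2 n a b \<Longrightarrow> (\<lambda>p. c * g p) \<in> tensor2 n a b"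
  unfolding tensor2_def by auto

section \<open>The exchange sums W(i, j)\<close>

(* The disjointness conditions are those under which the products e_(S - A) e_C and
   e_A e_(Y - C) e_Z do not vanish. *)
definition exch_pairs :: "nat set \<Rightarrow> nat set \<Rightarrow> nat set \<Rightarrow> nat \<Rightarrow> nat \<Rightarrow> (nat set \<times> nat set) set" where
  "exch_pairs S Y Z i j = {(A, C). A \<subseteq> S \<and> card A = i \<and> C \<subseteq> Y \<and> card C = j \<and>
     (S - A) \<inter> C = {} \<and> A \<inter> (Y - C) = {} \<and> A \<inter> Z = {} \<and> (Y - C) \<inter> Z = {}}"

(* Exponent of the sign of a term: the shuffle signs of e_S = \<plusminus>e_(S - A) e_A and
   e_Y = \<plusminus>e_C e_(Y - C), followed by those of the two products. *)
definition exch_exp :: "nat set \<Rightarrow> nat set \<Rightarrow> nat set \<Rightarrow> nat set \<Rightarrow> nat set \<Rightarrow> nat" where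
  "exch_exp S Y Z A C = inversions (S - A) A + inversions C (Y - C)
     + inversions (S - A) C + inversions A (Y - C) + inversions A Z + inversions (Y - C) Z"

definition exch_target :: "nat set \<Rightarrow> nat set \<Rightarrow> nat set \<Rightarrow> nat set \<times> nat set \<Rightarrow> nat set \<times> nat set" where
  "exch_target S Y Z = (\<lambda>(A, C). ((S - A) \<union> C, A \<union> (Y - C) \<union> Z))"

definition exch_coeff :: "nat set \<Rightarrow> nat set \<Rightarrow> nat set \<Rightarrow> nat set \<times> nat set \<Rightarrow> 'k::ring_1" where
  "exch_coeff S Y Z = (\<lambda>(A, C). (-1) ^ exch_exp S Y Z A C)"

definition exch :: "nat set \<Rightarrow> nat set \<Rightarrow> nat set \<Rightarrow> nat \<Rightarrow> nat \<Rightarrow> nat set \<times> nat set \<Rightarrow> 'k::ring_1" where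
  "exch S Y Z i j = lincomb (exch_pairs S Y Z i j) (exch_coeff S Y Z) (exch_target S Y Z)"

lemma finite_exch_pairs: "finite S \<Longrightarrow> finite Y \<Longrightarrow> finite (exch_pairs S Y Z i j)"
  unfolding exch_pairs_def by (rule finite_subset[of _ "Pow S \<times> Pow Y"]) auto

lemma exch_pairsD:
  assumes "(A, C) \<in> exch_pairs S Y Z i j" "finite S" "finite Y"
  shows "A \<subseteq> S" "C \<subseteq> Y" "finite A" "finite C" "card A = i" "card C = j"
    "(S - A) \<inter> C = {}" "A \<inter> (Y - C) = {}" "A \<inter> Z = {}" "(Y - C) \<inter> Z = {}"
  using assms finite_subset unfolding exch_pairs_def by auto

lemma even_exch_exp_move_from_S:
  assumes fin: "finite S" "finite Y" "finite Z" and AC: "(A, C) \<in> exch_pairs S Y Z i j"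
    and u: "u \<in> S" "u \<notin> A" "u \<notin> Y" "u \<notin> Z"
  shows "even (exch_exp S Y Z A C + inversions ((S - A) \<union> C - {u}) {u} + inversions {u} (A \<union> (Y - C) \<union> Z))
     \<longleftrightarrow> even (j + exch_exp S Y Z (insert u A) C)"
proof -
  note P = exch_pairsD[OF AC fin(1,2)]
  define R where "R = S - insert u A"
  define E where "E = Y - C"
  have fR: "finite R" "finite E" using fin by (auto simp: R_def E_def)
  have uR: "u \<notin> R" "u \<notin> E" "u \<notin> C" using u P by (auto simp: R_def E_def)
  have dRC: "R \<inter> C = {}" and dAE: "A \<inter> E = {}" "(A \<union> E) \<inter> Z = {}"
    using P by (auto simp: R_def E_def)
  have "S - A = insert u R" using u by (auto simp: R_def)
  then have h1: "inversions (S - A) A = inversions {u} A + inversions R A"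
    and h2: "inversions (S - A) C = inversions {u} C + inversions R C"
    using inversions_insert_left[OF fR(1) _ uR(1)] P by simp_all
  have "(S - A) \<union> C - {u} = R \<union> C" using u uR by (auto simp: R_def)
  then have h3: "inversions ((S - A) \<union> C - {u}) {u} = inversions R {u} + inversions C {u}"
    using inversions_Un_left[OF fR(1) P(4) _ dRC] by simp
  have h4: "inversions {u} (A \<union> E \<union> Z) = inversions {u} A + inversions {u} E + inversions {u} Z"
    using inversions_Un_right[OF _ _ _ dAE(2), of "{u}"] inversions_Un_right[OF _ _ _ dAE(1), of "{u}"]
      P fR fin by simp
  have h5: "inversions R (insert u A) = inversions R {u} + inversions R A"
    and h6: "inversions (insert u A) E = inversions {u} E + inversions A E"
    and h7: "inversions (insert u A) Z = inversions {u} Z + inversions A Z"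
    using inversions_insert_right[OF fR(1) P(3) u(2)] inversions_insert_left[OF P(3) _ u(2)] fR fin
    by simp_all
  have sw: "inversions {u} C + inversions C {u} = j"
    using inversions_singleton_swap[OF P(4) uR(3)] P(6) by simp
  have "exch_exp S Y Z A C + inversions ((S - A) \<union> C - {u}) {u} + inversions {u} (A \<union> (Y - C) \<union> Z)
     = j + exch_exp S Y Z (insert u A) C + 2 * inversions {u} A"
    unfolding exch_exp_def E_def[symmetric] R_def[symmetric] h1 h2 h3 h4 h5 h6 h7 sw[symmetric]
    by simp
  then show ?thesis by simp
qed

lemma even_exch_exp_move_from_C:
  assumes fin: "finite S" "finite Y" "finite Z" and AC: "(A, C) \<in> exch_pairs S Y Z i j"
    and u: "u \<in> C" "u \<notin> S" "u \<notin> Z"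
  shows "even (exch_exp S Y Z A C + inversions ((S - A) \<union> C - {u}) {u} + inversions {u} (A \<union> (Y - C) \<union> Z))
     \<longleftrightarrow> even (i + exch_exp S Y Z A (C - {u}))"
proof -
  note P = exch_pairsD[OF AC fin(1,2)]
  define R where "R = S - A"
  define E where "E = Y - C"
  define C' where "C' = C - {u}"
  have fC': "finite C'" and fR: "finite R" "finite E" using fin P by (auto simp: R_def E_def C'_def)
  have uR: "u \<notin> R" "u \<notin> E" "u \<notin> C'" "u \<notin> A" using u P by (auto simp: R_def E_def C'_def)
  have dRC: "R \<inter> C' = {}" and dAE: "A \<inter> E = {}" "(A \<union> E) \<inter> Z = {}"
    using P by (auto simp: R_def E_def C'_def)
  have "C = insert u C'" using u by (auto simp: C'_def)
  then have h1: "inversions C E = inversions {u} E + inversions C' E"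
    and h2: "inversions R C = inversions R {u} + inversions R C'"
    using inversions_insert_left[OF fC' fR(2) uR(3)] inversions_insert_right[OF fR(1) fC' uR(3)] by simp_all
  have "R \<union> C - {u} = R \<union> C'" using u by (auto simp: R_def C'_def)
  then have h3: "inversions (R \<union> C - {u}) {u} = inversions R {u} + inversions C' {u}"
    using inversions_Un_left[OF fR(1) fC' _ dRC] by simp
  have h4: "inversions {u} (A \<union> E \<union> Z) = inversions {u} A + inversions {u} E + inversions {u} Z"
    using inversions_Un_right[OF _ _ _ dAE(2), of "{u}"] inversions_Un_right[OF _ _ _ dAE(1), of "{u}"]
      P fR fin by simp
  have "Y - C' = insert u E" using u P by (auto simp: E_def C'_def)
  then have h5: "inversions C' (Y - C') = inversions C' {u} + inversions C' E"
    and h6: "inversions A (Y - C') = inversions A {u} + inversions A E"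
    and h7: "inversions (Y - C') Z = inversions {u} Z + inversions E Z"
    using inversions_insert_right[OF _ fR(2) uR(2)] inversions_insert_left[OF fR(2) fin(3) uR(2)] fC' P
    by simp_all
  have sw: "inversions {u} A + inversions A {u} = i"
    using inversions_singleton_swap[OF P(3) uR(4)] P(5) by simp
  have "exch_exp S Y Z A C + inversions ((S - A) \<union> C - {u}) {u} + inversions {u} (A \<union> (Y - C) \<union> Z)
      + 2 * inversions A {u} = i + exch_exp S Y Z A (C - {u}) + 2 * inversions {u} E + 2 * inversions R {u}"
    unfolding exch_exp_def E_def[symmetric] R_def[symmetric] C'_def[symmetric] h1 h2 h3 h4 h5 h6 h7 sw[symmetric]
    by simp
  then show ?thesis by presburger
qed

lemma even_exch_exp_insert_both:
  assumes fin: "finite S" "finite Y" "finite Z" and sub: "A \<subseteq> S" "C \<subseteq> Y"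
    and u: "u \<in> S" "u \<in> Y" "u \<notin> A" "u \<notin> C" "u \<notin> Z" and card: "card A = card C"
  shows "even (exch_exp S Y Z (insert u A) (insert u C)) \<longleftrightarrow> even (exch_exp S Y Z A C)"
proof -
  define R where "R = S - insert u A"
  define E where "E = Y - insert u C"
  have fA: "finite A" "finite C" using fin sub finite_subset by auto
  have fR: "finite R" "finite E" using fin by (auto simp: R_def E_def)
  have uR: "u \<notin> R" "u \<notin> E" using u by (auto simp: R_def E_def)
  have h1: "inversions R (insert u A) = inversions R {u} + inversions R A"
    and h2: "inversions (insert u C) E = inversions {u} E + inversions C E"
    and h3: "inversions R (insert u C) = inversions R {u} + inversions R C"
    and h4: "inversions (insert u A) E = inversions {u} E + inversions A E"
    and h5: "inversions (insert u A) Z = inversions {u} Z + inversions A Z"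
    using inversions_insert_right[OF fR(1) fA(1) u(3)] inversions_insert_left[OF fA(2) fR(2) u(4)]
      inversions_insert_right[OF fR(1) fA(2) u(4)] inversions_insert_left[OF fA(1) fR(2) u(3)]
      inversions_insert_left[OF fA(1) fin(3) u(3)] by simp_all
  have "S - A = insert u R" using u sub by (auto simp: R_def)
  then have g1: "inversions (S - A) A = inversions {u} A + inversions R A"
    and g3: "inversions (S - A) C = inversions {u} C + inversions R C"
    using inversions_insert_left[OF fR(1) _ uR(1)] fA by simp_all
  have "Y - C = insert u E" using u sub by (auto simp: E_def)
  then have g2: "inversions C (Y - C) = inversions C {u} + inversions C E"
    and g4: "inversions A (Y - C) = inversions A {u} + inversions A E"
    and g5: "inversions (Y - C) Z = inversions {u} Z + inversions E Z"
    using inversions_insert_right[OF _ fR(2) uR(2)] inversions_insert_left[OF fR(2) fin(3) uR(2)] fA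
    by simp_all
  have "exch_exp S Y Z (insert u A) (insert u C) + card A + card C
      = exch_exp S Y Z A C + 2 * inversions R {u} + 2 * inversions {u} E"
    unfolding exch_exp_def E_def[symmetric] R_def[symmetric] h1 h2 h3 h4 h5 g1 g2 g3 g4 g5
      inversions_singleton_swap[OF fA(1) u(3), symmetric] inversions_singleton_swap[OF fA(2) u(4), symmetric]
    by simp
  then show ?thesis using card by presburger
qed

lemma exch_target_in_ext_basis:
  assumes S: "S \<in> ext_basis n a" and Y: "Y \<in> ext_basis n k" and Z: "Z \<in> ext_basis n (b - k)"
    and "k \<le> b" and x: "x \<in> exch_pairs S Y Z i (Suc i)"
  shows "exch_target S Y Z x \<in> ext_basis n (a + 1) \<times> ext_basis n (b - 1)"
proof -
  obtain A C where AC: "(A, C) \<in> exch_pairs S Y Z i (Suc i)" and x_eq: "x = (A, C)"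
    using x by (metis prod.collapse)
  note S = ext_basisD[OF S] and Y = ext_basisD[OF Y] and Z = ext_basisD[OF Z]
  note P = exch_pairsD[OF AC conjunct1[OF S] conjunct1[OF Y]]
  have "i \<le> a" "Suc i \<le> k" using P S Y card_mono by metis+
  then have "card ((S - A) \<union> C) = a + 1" "card (A \<union> (Y - C) \<union> Z) = b - 1"
    using P S Y Z \<open>k \<le> b\<close> by (simp_all add: card_Un_disjoint card_Diff_subset Int_Un_distrib2)
  then show ?thesis using P S Y Z by (auto simp: x_eq exch_target_def ext_basis_def)
qed

lemma exch_0_0_eq_wedge:
  assumes "finite S" "finite Y"
  shows "exch S Y Z 0 0 (P, Q) = (if P = S then wedge_b Y Z Q else (0::'k::field))"
proof -
  have "exch_pairs S Y Z 0 0 = (if Y \<inter> Z = {} then {({}, {})} else {})"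
    using assms by (auto simp: exch_pairs_def card_0_eq finite_subset)
  then show ?thesis
    by (simp add: exch_def lincomb_def exch_coeff_def exch_target_def exch_exp_def wsign_inversions wedge_b_def)
qed

lemma exch_diag_eq_beta_b:
  assumes fin: "finite S" "finite Y" and card: "card S = a" "card Y = k"
  shows "exch S Y Z k k (P, Q) = (beta_b a k S Y Z (P, Q) :: 'k::field)"
proof -
  let ?F = "\<lambda>A. if card A = k \<and> (S - A) \<inter> Y = {} \<and> A \<inter> Z = {} \<and> ((S - A) \<union> Y, A \<union> Z) = (P, Q)
      then wsign (S - A) A * wsign (S - A) Y * wsign A Z else (0::'k)"
  have "C = Y" if "C \<subseteq> Y" "card C = k" for C
    using that card_subset_eq fin card by metis
  then have pairs: "exch_pairs S Y Z k k = (\<lambda>A. (A, Y)) ` {A \<in> Pow S. card A = k \<and> (S - A) \<inter> Y = {} \<and> A \<inter> Z = {}}"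
    using card by (auto simp: exch_pairs_def)
  have "exch S Y Z k k (P, Q) = (\<Sum>A\<in>{A \<in> Pow S. card A = k \<and> (S - A) \<inter> Y = {} \<and> A \<inter> Z = {}}.
        if exch_target S Y Z (A, Y) = (P, Q) then exch_coeff S Y Z (A, Y) else 0)"
    unfolding exch_def lincomb_def pairs by (subst sum.reindex) (auto simp: inj_on_def)
  also have "\<dots> = (\<Sum>A\<in>Pow S. ?F A)"
    by (rule sum.mono_neutral_cong_left)
      (auto simp: fin exch_target_def exch_coeff_def exch_exp_def wsign_inversions power_add)
  also have "\<dots> = (\<Sum>B\<in>Pow S. \<Sum>A\<in>Pow S. comult_b (a - k) k S (A, B) * wedge_b A Y P * wedge_b B Z Q)"
  proof (rule sum.cong[OF refl])
    fix B assume B: "B \<in> Pow S"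
    then have "card (S - B) = a - card B" using fin card by (simp add: card_Diff_subset finite_subset)
    then have "comult_b (a - k) k S (A, B) * wedge_b A Y P * wedge_b B Z Q
        = (if A = S - B then ?F B else 0)" for A
      using B by (cases "A = S - B") (simp_all add: comult_b_eq wedge_b_def eq_commute[of P] eq_commute[of Q])
    then show "?F B = (\<Sum>A\<in>Pow S. comult_b (a - k) k S (A, B) * wedge_b A Y P * wedge_b B Z Q)"
      using fin by (simp add: sum.delta')
  qed
  also have "\<dots> = beta_b a k S Y Z (P, Q)"
    unfolding beta_b_def prod.case by (rule sum.swap)
  finally show ?thesis .
qed

section \<open>The identity for \<theta>_1 W(i, i + 1)\<close>

locale basis_triple =
  fixes n a b k :: nat and S Y Z :: "nat set"
  assumes S_basis: "S \<in> ext_basis n a" and Y_basis: "Y \<in> ext_basis n k"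
    and Z_basis: "Z \<in> ext_basis n (b - k)" and k_le_b: "k \<le> b"
begin

lemma finite_S: "finite S" and finite_Y: "finite Y" and finite_Z: "finite Z"
  and card_S: "card S = a" and card_Y: "card Y = k"
  using ext_basisD[OF S_basis] ext_basisD[OF Y_basis] ext_basisD[OF Z_basis] by auto

lemma exch_pairsE:
  assumes "(A, C) \<in> exch_pairs S Y Z i j"
  obtains "A \<subseteq> S" "C \<subseteq> Y" "finite A" "finite C" "card A = i" "card C = j"
    "(S - A) \<inter> C = {}" "A \<inter> (Y - C) = {}" "A \<inter> Z = {}" "(Y - C) \<inter> Z = {}"
  using exch_pairsD[OF assms finite_S finite_Y] by blast

lemma exch_pairs_insert_A:
  "(A, C) \<in> exch_pairs S Y Z i j \<Longrightarrow> u \<in> S \<Longrightarrow> u \<notin> A \<Longrightarrow> u \<notin> Y \<Longrightarrow> u \<notin> Z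
    \<Longrightarrow> (insert u A, C) \<in> exch_pairs S Y Z (Suc i) j \<and> u \<notin> C"
  by (erule exch_pairsE) (auto simp: exch_pairs_def)

lemma exch_pairs_remove_A:
  "(A, C) \<in> exch_pairs S Y Z (Suc i) j \<Longrightarrow> u \<in> A \<Longrightarrow> u \<notin> C
    \<Longrightarrow> (A - {u}, C) \<in> exch_pairs S Y Z i j \<and> u \<in> S \<and> u \<notin> Y \<and> u \<notin> Z"
  by (erule exch_pairsE) (auto simp: exch_pairs_def)

lemma exch_pairs_remove_C:
  "(A, C) \<in> exch_pairs S Y Z i (Suc j) \<Longrightarrow> u \<in> C \<Longrightarrow> u \<notin> S \<Longrightarrow> u \<notin> Z
    \<Longrightarrow> (A, C - {u}) \<in> exch_pairs S Y Z i j \<and> u \<in> Y"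
  by (erule exch_pairsE) (auto simp: exch_pairs_def)

lemma exch_pairs_insert_C:
  "(A, C) \<in> exch_pairs S Y Z i j \<Longrightarrow> u \<in> Y \<Longrightarrow> u \<notin> C \<Longrightarrow> u \<notin> S
    \<Longrightarrow> (A, insert u C) \<in> exch_pairs S Y Z i (Suc j) \<and> u \<notin> Z"
  by (erule exch_pairsE) (auto simp: exch_pairs_def)

lemma exch_pairs_remove_both:
  "(A, C) \<in> exch_pairs S Y Z (Suc i) (Suc i) \<Longrightarrow> u \<in> A \<Longrightarrow> u \<in> C
    \<Longrightarrow> (A - {u}, C - {u}) \<in> exch_pairs S Y Z i i \<and> u \<in> Y \<and> u \<in> S"
  by (erule exch_pairsE) (auto simp: exch_pairs_def)

lemma exch_pairs_insert_both:
  "(A, C) \<in> exch_pairs S Y Z i i \<Longrightarrow> u \<in> Y \<Longrightarrow> u \<notin> C \<Longrightarrow> u \<in> S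
    \<Longrightarrow> (insert u A, insert u C) \<in> exch_pairs S Y Z (Suc i) (Suc i) \<and> u \<notin> A"
  by (erule exch_pairsE) (auto simp: exch_pairs_def card_insert_if)

(* The terms of \<theta>_1 W(i, i + 1): a pair (A, C) and the element u moved to the right factor. *)
definition moves :: "nat \<Rightarrow> ((nat set \<times> nat set) \<times> nat) set" where
  "moves i = Sigma (exch_pairs S Y Z i (Suc i)) (\<lambda>(A, C). (S - A) \<union> C - (A \<union> (Y - C) \<union> Z))"

definition moves_from_S :: "nat \<Rightarrow> ((nat set \<times> nat set) \<times> nat) set" where
  "moves_from_S i = {((A, C), u). (A, C) \<in> exch_pairs S Y Z i (Suc i) \<and> u \<in> S - (A \<union> Y \<union> Z)}"

definition moves_from_C :: "nat \<Rightarrow> ((nat set \<times> nat set) \<times> nat) set" where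
  "moves_from_C i = {((A, C), u). (A, C) \<in> exch_pairs S Y Z i (Suc i) \<and> u \<in> C - (S \<union> Z)}"

definition move_coeff :: "(nat set \<times> nat set) \<times> nat \<Rightarrow> 'k::ring_1" where
  "move_coeff = (\<lambda>((A, C), u). (-1) ^ (exch_exp S Y Z A C
     + inversions ((S - A) \<union> C - {u}) {u} + inversions {u} (A \<union> (Y - C) \<union> Z)))"

definition move_target :: "(nat set \<times> nat set) \<times> nat \<Rightarrow> nat set \<times> nat set" where
  "move_target = (\<lambda>((A, C), u). ((S - A) \<union> C - {u}, insert u (A \<union> (Y - C) \<union> Z)))"

lemma finite_moves: "finite (moves i)"
  unfolding moves_def
  by (rule finite_SigmaI[OF finite_exch_pairs[OF finite_S finite_Y]]) (auto simp: finite_S elim!: exch_pairsE)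

lemma moves_eq_Un: "moves i = moves_from_S i \<union> moves_from_C i"
  unfolding moves_def moves_from_S_def moves_from_C_def exch_pairs_def by auto

lemma theta1_exch_eq_moves:
  "theta1 n a b (exch S Y Z i (Suc i) :: _ \<Rightarrow> 'k::field) p = lincomb (moves i) move_coeff move_target p"
proof -
  let ?I = "exch_pairs S Y Z i (Suc i)"
  have "theta1 n a b (exch S Y Z i (Suc i) :: _ \<Rightarrow> 'k) p
      = (\<Sum>x\<in>?I. exch_coeff S Y Z x * theta1_b a (fst (exch_target S Y Z x)) (snd (exch_target S Y Z x)) p)"
    unfolding exch_def using finite_exch_pairs[OF finite_S finite_Y]
    by (rule theta1_lincomb) (rule exch_target_in_ext_basis[OF S_basis Y_basis Z_basis k_le_b])
  also have "\<dots> = (\<Sum>x\<in>?I. lincomb ((\<lambda>(A, C). (S - A) \<union> C - (A \<union> (Y - C) \<union> Z)) x)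
      (\<lambda>u. move_coeff (x, u)) (\<lambda>u. move_target (x, u)) p)"
  proof (rule sum.cong[OF refl])
    fix x assume x: "x \<in> ?I"
    obtain A C where AC: "x = (A, C)" by fastforce
    have "exch_target S Y Z x \<in> ext_basis n (a + 1) \<times> ext_basis n (b - 1)"
      using x by (rule exch_target_in_ext_basis[OF S_basis Y_basis Z_basis k_le_b])
    then have "finite ((S - A) \<union> C)" "card ((S - A) \<union> C) = a + 1"
      by (auto simp: AC exch_target_def dest: ext_basisD)
    then show "exch_coeff S Y Z x * theta1_b a (fst (exch_target S Y Z x)) (snd (exch_target S Y Z x)) p
        = lincomb ((\<lambda>(A, C). (S - A) \<union> C - (A \<union> (Y - C) \<union> Z)) x) (\<lambda>u. move_coeff (x, u)) (\<lambda>u. move_target (x, u)) p"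
      by (simp add: AC exch_target_def theta1_b_lincomb mult_lincomb exch_coeff_def move_coeff_def
          move_target_def wsign_inversions power_add mult.assoc)
  qed
  also have "\<dots> = lincomb (moves i) move_coeff move_target p"
    unfolding moves_def
    by (rule lincomb_Sigma[symmetric, OF finite_exch_pairs[OF finite_S finite_Y]])
      (auto simp: finite_S elim!: exch_pairsE)
  finally show ?thesis .
qed

lemma lincomb_moves_from_S:
  "lincomb (moves_from_S i) move_coeff move_target p
     = (-1) ^ Suc i * (lincomb {((A, C), u). (A, C) \<in> exch_pairs S Y Z (Suc i) (Suc i) \<and> u \<in> A - C}
         (\<lambda>y. exch_coeff S Y Z (fst y)) (\<lambda>y. exch_target S Y Z (fst y)) p :: 'k::ring_1)"
proof -
  let ?h = "\<lambda>((A, C), u). ((insert u A, C), u)"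
  have "bij_betw ?h (moves_from_S i) {((A, C), u). (A, C) \<in> exch_pairs S Y Z (Suc i) (Suc i) \<and> u \<in> A - C}"
    by (rule bij_betw_byWitness[where f'="\<lambda>((A, C), u). ((A - {u}, C), u)"])
      (auto simp: moves_from_S_def insert_absorb dest: exch_pairs_remove_A exch_pairs_insert_A)
  then have "lincomb (moves_from_S i) move_coeff move_target = lincomb
      {((A, C), u). (A, C) \<in> exch_pairs S Y Z (Suc i) (Suc i) \<and> u \<in> A - C}
      (\<lambda>y. (-1) ^ Suc i * exch_coeff S Y Z (fst y) :: 'k) (\<lambda>y. exch_target S Y Z (fst y))"
  proof (rule lincomb_reindex)
    fix y assume "y \<in> moves_from_S i"
    then obtain A C u where y: "y = ((A, C), u)" and AC: "(A, C) \<in> exch_pairs S Y Z i (Suc i)"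
      and u: "u \<in> S" "u \<notin> A" "u \<notin> Y" "u \<notin> Z"
      by (auto simp: moves_from_S_def)
    have "(-1 :: 'k) ^ (exch_exp S Y Z A C + inversions ((S - A) \<union> C - {u}) {u}
        + inversions {u} (A \<union> (Y - C) \<union> Z)) = (-1) ^ (Suc i + exch_exp S Y Z (insert u A) C)"
      by (rule minus_one_power_parity_eq, rule even_exch_exp_move_from_S[OF finite_S finite_Y finite_Z AC u])
    then show "move_coeff y = ((-1) ^ Suc i * exch_coeff S Y Z (fst (?h y)) :: 'k)"
      by (simp add: y move_coeff_def exch_coeff_def power_add)
    have "u \<notin> C" using AC u by (auto elim: exch_pairsE)
    then show "move_target y = exch_target S Y Z (fst (?h y))"
      using u by (auto simp: y move_target_def exch_target_def)
  qed
  then show ?thesis by (simp add: mult_lincomb)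
qed

lemma lincomb_moves_from_C:
  "lincomb (moves_from_C i) move_coeff move_target p
     = (-1) ^ i * (lincomb {((A, C), u). (A, C) \<in> exch_pairs S Y Z i i \<and> u \<in> Y - (C \<union> S)}
         (\<lambda>y. exch_coeff S Y Z (fst y)) (\<lambda>y. exch_target S Y Z (fst y)) p :: 'k::ring_1)"
proof -
  let ?h = "\<lambda>((A, C), u). ((A, C - {u}), u)"
  have "bij_betw ?h (moves_from_C i) {((A, C), u). (A, C) \<in> exch_pairs S Y Z i i \<and> u \<in> Y - (C \<union> S)}"
  proof (rule bij_betw_byWitness[where f'="\<lambda>((A, C), u). ((A, insert u C), u)"])
    show "(\<lambda>((A, C), u). ((A, C - {u}), u)) ` moves_from_C i
        \<subseteq> {((A, C), u). (A, C) \<in> exch_pairs S Y Z i i \<and> u \<in> Y - (C \<union> S)}"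
      by (auto simp: moves_from_C_def dest: exch_pairs_remove_C)
    show "(\<lambda>((A, C), u). ((A, insert u C), u)) `
        {((A, C), u). (A, C) \<in> exch_pairs S Y Z i i \<and> u \<in> Y - (C \<union> S)} \<subseteq> moves_from_C i"
      by (auto simp: moves_from_C_def dest: exch_pairs_insert_C)
  qed (auto simp: moves_from_C_def insert_absorb)
  then have "lincomb (moves_from_C i) move_coeff move_target = lincomb
      {((A, C), u). (A, C) \<in> exch_pairs S Y Z i i \<and> u \<in> Y - (C \<union> S)}
      (\<lambda>y. (-1) ^ i * exch_coeff S Y Z (fst y) :: 'k) (\<lambda>y. exch_target S Y Z (fst y))"
  proof (rule lincomb_reindex)
    fix y assume "y \<in> moves_from_C i"
    then obtain A C u where y: "y = ((A, C), u)" and AC: "(A, C) \<in> exch_pairs S Y Z i (Suc i)"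
      and u: "u \<in> C" "u \<notin> S" "u \<notin> Z"
      by (auto simp: moves_from_C_def)
    have "(-1 :: 'k) ^ (exch_exp S Y Z A C + inversions ((S - A) \<union> C - {u}) {u}
        + inversions {u} (A \<union> (Y - C) \<union> Z)) = (-1) ^ (i + exch_exp S Y Z A (C - {u}))"
      by (rule minus_one_power_parity_eq, rule even_exch_exp_move_from_C[OF finite_S finite_Y finite_Z AC u])
    then show "move_coeff y = ((-1) ^ i * exch_coeff S Y Z (fst (?h y)) :: 'k)"
      by (simp add: y move_coeff_def exch_coeff_def power_add)
    have "u \<in> Y" using AC u by (auto elim: exch_pairsE)
    then show "move_target y = exch_target S Y Z (fst (?h y))"
      using u by (auto simp: y move_target_def exch_target_def)
  qed
  then show ?thesis by (simp add: mult_lincomb)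
qed

definition marked_in_A :: "nat \<Rightarrow> ((nat set \<times> nat set) \<times> nat) set" where
  "marked_in_A i = Sigma (exch_pairs S Y Z i i) fst"

definition marked_in_Y :: "nat \<Rightarrow> ((nat set \<times> nat set) \<times> nat) set" where
  "marked_in_Y i = Sigma (exch_pairs S Y Z i i) (\<lambda>x. Y - snd x)"

lemma finite_marked_in_A: "finite (marked_in_A i)"
  unfolding marked_in_A_def
  by (rule finite_SigmaI[OF finite_exch_pairs[OF finite_S finite_Y]]) (auto elim: exch_pairsE)

lemma finite_marked_in_Y: "finite (marked_in_Y i)"
  unfolding marked_in_Y_def
  by (rule finite_SigmaI[OF finite_exch_pairs[OF finite_S finite_Y]]) (auto simp: finite_Y)

lemma lincomb_marked_in_A:
  "lincomb (marked_in_A i) (\<lambda>y. exch_coeff S Y Z (fst y)) (\<lambda>y. exch_target S Y Z (fst y)) p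
     = of_nat i * (exch S Y Z i i p :: 'k::ring_1)"
proof -
  have "lincomb (marked_in_A i) (\<lambda>y. exch_coeff S Y Z (fst y) :: 'k) (\<lambda>y. exch_target S Y Z (fst y)) p
      = lincomb (exch_pairs S Y Z i i) (\<lambda>x. of_nat (card (fst x)) * exch_coeff S Y Z x) (exch_target S Y Z) p"
    unfolding marked_in_A_def
    by (rule lincomb_Sigma_fst[OF finite_exch_pairs[OF finite_S finite_Y]]) (auto elim: exch_pairsE)
  also have "\<dots> = lincomb (exch_pairs S Y Z i i) (\<lambda>x. of_nat i * exch_coeff S Y Z x) (exch_target S Y Z) p"
    by (rule arg_cong[where f="\<lambda>h. h p"], rule lincomb_cong) (auto elim: exch_pairsE)
  finally show ?thesis by (simp add: exch_def mult_lincomb)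
qed

lemma lincomb_marked_in_Y:
  "lincomb (marked_in_Y i) (\<lambda>y. exch_coeff S Y Z (fst y)) (\<lambda>y. exch_target S Y Z (fst y)) p
     = of_nat (k - i) * (exch S Y Z i i p :: 'k::ring_1)"
proof -
  have "lincomb (marked_in_Y i) (\<lambda>y. exch_coeff S Y Z (fst y) :: 'k) (\<lambda>y. exch_target S Y Z (fst y)) p
      = lincomb (exch_pairs S Y Z i i) (\<lambda>x. of_nat (card (Y - snd x)) * exch_coeff S Y Z x) (exch_target S Y Z) p"
    unfolding marked_in_Y_def
    by (rule lincomb_Sigma_fst[OF finite_exch_pairs[OF finite_S finite_Y]]) (auto simp: finite_Y)
  also have "\<dots> = lincomb (exch_pairs S Y Z i i) (\<lambda>x. of_nat (k - i) * exch_coeff S Y Z x) (exch_target S Y Z) p"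
    by (rule arg_cong[where f="\<lambda>h. h p"], rule lincomb_cong)
      (auto simp: card_Diff_subset card_Y elim!: exch_pairsE)
  finally show ?thesis by (simp add: exch_def mult_lincomb)
qed

lemma lincomb_marked_in_both:
  "lincomb {((A, C), u). (A, C) \<in> exch_pairs S Y Z (Suc i) (Suc i) \<and> u \<in> A \<inter> C}
       (\<lambda>y. exch_coeff S Y Z (fst y)) (\<lambda>y. exch_target S Y Z (fst y)) p
     = (lincomb {((A, C), u). (A, C) \<in> exch_pairs S Y Z i i \<and> u \<in> (Y - C) \<inter> S}
         (\<lambda>y. exch_coeff S Y Z (fst y)) (\<lambda>y. exch_target S Y Z (fst y)) p :: 'k::ring_1)"
proof -
  let ?h = "\<lambda>((A, C), u). ((A - {u}, C - {u}), u)"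
  have "bij_betw ?h {((A, C), u). (A, C) \<in> exch_pairs S Y Z (Suc i) (Suc i) \<and> u \<in> A \<inter> C}
      {((A, C), u). (A, C) \<in> exch_pairs S Y Z i i \<and> u \<in> (Y - C) \<inter> S}"
  proof (rule bij_betw_byWitness[where f'="\<lambda>((A, C), u). ((insert u A, insert u C), u)"])
    show "?h ` {((A, C), u). (A, C) \<in> exch_pairs S Y Z (Suc i) (Suc i) \<and> u \<in> A \<inter> C}
        \<subseteq> {((A, C), u). (A, C) \<in> exch_pairs S Y Z i i \<and> u \<in> (Y - C) \<inter> S}"
      by (auto dest: exch_pairs_remove_both)
    show "(\<lambda>((A, C), u). ((insert u A, insert u C), u)) `
        {((A, C), u). (A, C) \<in> exch_pairs S Y Z i i \<and> u \<in> (Y - C) \<inter> S}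
        \<subseteq> {((A, C), u). (A, C) \<in> exch_pairs S Y Z (Suc i) (Suc i) \<and> u \<in> A \<inter> C}"
      by (auto dest: exch_pairs_insert_both)
    show "\<forall>y\<in>{((A, C), u). (A, C) \<in> exch_pairs S Y Z i i \<and> u \<in> (Y - C) \<inter> S}.
        ?h ((\<lambda>((A, C), u). ((insert u A, insert u C), u)) y) = y"
      by (auto dest: exch_pairs_insert_both)
  qed (auto simp: insert_absorb)
  then have "lincomb {((A, C), u). (A, C) \<in> exch_pairs S Y Z (Suc i) (Suc i) \<and> u \<in> A \<inter> C}
      (\<lambda>y. exch_coeff S Y Z (fst y) :: 'k) (\<lambda>y. exch_target S Y Z (fst y))
    = lincomb {((A, C), u). (A, C) \<in> exch_pairs S Y Z i i \<and> u \<in> (Y - C) \<inter> S}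
      (\<lambda>y. exch_coeff S Y Z (fst y)) (\<lambda>y. exch_target S Y Z (fst y))"
  proof (rule lincomb_reindex)
    fix y assume "y \<in> {((A, C), u). (A, C) \<in> exch_pairs S Y Z (Suc i) (Suc i) \<and> u \<in> A \<inter> C}"
    then obtain A C u where y: "y = ((A, C), u)" and AC: "(A, C) \<in> exch_pairs S Y Z (Suc i) (Suc i)"
      and u: "u \<in> A" "u \<in> C"
      by auto
    have AC': "A - {u} \<subseteq> S" "C - {u} \<subseteq> Y" "u \<in> S" "u \<in> Y" "u \<notin> Z" "card (A - {u}) = card (C - {u})"
      using AC u by (auto elim!: exch_pairsE)
    have "even (exch_exp S Y Z (insert u (A - {u})) (insert u (C - {u}))) \<longleftrightarrow> even (exch_exp S Y Z (A - {u}) (C - {u}))"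
      using AC' by (intro even_exch_exp_insert_both[OF finite_S finite_Y finite_Z]) auto
    then have "(-1 :: 'k) ^ exch_exp S Y Z A C = (-1) ^ exch_exp S Y Z (A - {u}) (C - {u})"
      using u by (intro minus_one_power_parity_eq) (simp add: insert_absorb)
    then show "exch_coeff S Y Z (fst y) = (exch_coeff S Y Z (fst (?h y)) :: 'k)"
      by (simp add: y exch_coeff_def)
    show "exch_target S Y Z (fst y) = exch_target S Y Z (fst (?h y))"
      using u AC' by (auto simp: y exch_target_def)
  qed
  then show ?thesis by simp
qed

lemma theta1_exch:
  "theta1 n a b (exch S Y Z i (Suc i)) p
     = (-1) ^ i * (of_nat (k - i) * exch S Y Z i i p - of_nat (Suc i) * (exch S Y Z (Suc i) (Suc i) p :: 'k::field))"
proof -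
  let ?L = "\<lambda>I. lincomb I (\<lambda>y. exch_coeff S Y Z (fst y) :: 'k) (\<lambda>y. exch_target S Y Z (fst y)) p"
  let ?A1 = "{((A, C), u). (A, C) \<in> exch_pairs S Y Z (Suc i) (Suc i) \<and> u \<in> A - C}"
  let ?A2 = "{((A, C), u). (A, C) \<in> exch_pairs S Y Z (Suc i) (Suc i) \<and> u \<in> A \<inter> C}"
  let ?Y1 = "{((A, C), u). (A, C) \<in> exch_pairs S Y Z i i \<and> u \<in> Y - (C \<union> S)}"
  let ?Y2 = "{((A, C), u). (A, C) \<in> exch_pairs S Y Z i i \<and> u \<in> (Y - C) \<inter> S}"
  have A_split: "marked_in_A (Suc i) = ?A1 \<union> ?A2" and Y_split: "marked_in_Y i = ?Y1 \<union> ?Y2"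
    by (auto simp: marked_in_A_def marked_in_Y_def)
  have fin: "finite (moves_from_S i)" "finite (moves_from_C i)" "finite ?A1" "finite ?A2" "finite ?Y1" "finite ?Y2"
    using finite_moves[of i] finite_marked_in_A[of "Suc i"] finite_marked_in_Y[of i]
    unfolding moves_eq_Un A_split Y_split by auto
  have moves: "theta1 n a b (exch S Y Z i (Suc i)) p = (-1) ^ Suc i * ?L ?A1 + (-1) ^ i * ?L ?Y1"
  proof -
    have disj: "moves_from_S i \<inter> moves_from_C i = {}" by (auto simp: moves_from_S_def moves_from_C_def)
    show ?thesis
      unfolding theta1_exch_eq_moves moves_eq_Un lincomb_Un_disjoint[OF fin(1,2) disj]
        lincomb_moves_from_S lincomb_moves_from_C ..
  qed
  have marked_A: "of_nat (Suc i) * exch S Y Z (Suc i) (Suc i) p = ?L ?A1 + ?L ?A2"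
    unfolding lincomb_marked_in_A[symmetric] A_split by (rule lincomb_Un_disjoint) (use fin in auto)
  have marked_Y: "of_nat (k - i) * exch S Y Z i i p = ?L ?Y1 + ?L ?Y2"
    unfolding lincomb_marked_in_Y[symmetric] Y_split by (rule lincomb_Un_disjoint) (use fin in auto)
  show ?thesis
    unfolding moves marked_A marked_Y lincomb_marked_in_both by (simp add: algebra_simps)
qed

end

section \<open>The preimage of \<gamma>_k\<close>

lemma binomial_telescoping_coeff:
  fixes x y :: "'k::field_char_0"
  assumes "i < k"
  shows "(-1) ^ i / (of_nat (k - i) * of_nat (k choose i)) * ((-1) ^ i * (of_nat (k - i) * x - of_nat (Suc i) * y))
    = x / of_nat (k choose i) - y / of_nat (k choose Suc i)"
proof -
  have binom: "(of_nat (k - i) * of_nat (k choose i) :: 'k) = of_nat (Suc i) * of_nat (k choose Suc i)"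
    by (metis binomial_absorb_comp binomial_absorption of_nat_mult)
  have nonzero: "(of_nat (k - i) :: 'k) \<noteq> 0" "(of_nat (k choose i) :: 'k) \<noteq> 0"
      "(of_nat (Suc i) :: 'k) \<noteq> 0" "(of_nat (k choose Suc i) :: 'k) \<noteq> 0"
    using assms by (auto simp del: of_nat_Suc)
  have "(-1 :: 'k) ^ i * (-1) ^ i = 1"
    by (simp add: power_add[symmetric])
  then have "(-1) ^ i / (of_nat (k - i) * of_nat (k choose i)) * ((-1) ^ i * (of_nat (k - i) * x - of_nat (Suc i) * y))
      = (of_nat (k - i) * x - of_nat (Suc i) * y) / (of_nat (k - i) * of_nat (k choose i))"
    by (simp add: mult.assoc[symmetric])
  also have "\<dots> = of_nat (k - i) * x / (of_nat (k - i) * of_nat (k choose i))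
      - of_nat (Suc i) * y / (of_nat (Suc i) * of_nat (k choose Suc i))"
    unfolding diff_divide_distrib binom ..
  also have "\<dots> = x / of_nat (k choose i) - y / of_nat (k choose Suc i)"
    using nonzero by (simp del: of_nat_Suc)
  finally show ?thesis .
qed

(* Dividing by (k - i) * (k choose i) is where characteristic zero is needed. *)
definition gamma_preimage_b :: "nat \<Rightarrow> nat set \<Rightarrow> nat set \<Rightarrow> nat set \<Rightarrow> nat set \<times> nat set \<Rightarrow> 'k::field" where
  "gamma_preimage_b k S Y Z = (\<lambda>p. \<Sum>i<k. (-1) ^ i / (of_nat (k - i) * of_nat (k choose i)) * exch S Y Z i (Suc i) p)"

context basis_triple
begin

lemma theta1_gamma_preimage_b: "theta1 n a b (gamma_preimage_b k S Y Z) p = (gamma_b a k S Y Z p :: 'k::field_char_0)"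
proof -
  let ?t = "\<lambda>i. exch S Y Z i i p / (of_nat (k choose i) :: 'k)"
  have "theta1 n a b (gamma_preimage_b k S Y Z) p = (\<Sum>i<k. ?t i - ?t (Suc i))"
    unfolding gamma_preimage_b_def theta1_sum[OF finite_lessThan] theta1_scale
    unfolding theta1_exch by (intro sum.cong refl binomial_telescoping_coeff) simp
  also have "\<dots> = exch S Y Z 0 0 p - exch S Y Z k k p"
    using sum_lessThan_telescope'[of ?t k] by simp
  also have "\<dots> = gamma_b a k S Y Z p"
    by (cases p) (simp add: exch_0_0_eq_wedge exch_diag_eq_beta_b finite_S finite_Y card_S card_Y gamma_b_def)
  finally show ?thesis .
qed

lemma gamma_preimage_b_in_tensor2: "gamma_preimage_b k S Y Z \<in> (tensor2 n (a + 1) (b - 1) :: (_ \<Rightarrow> 'k::field) set)"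
  unfolding tensor2_def
proof (intro CollectI allI impI)
  fix P Q assume "(gamma_preimage_b k S Y Z (P, Q) :: 'k) \<noteq> 0"
  then obtain i where "i < k" "(exch S Y Z i (Suc i) (P, Q) :: 'k) \<noteq> 0"
    unfolding gamma_preimage_b_def by (auto elim: sum.not_neutral_contains_not_neutral)
  then obtain x where "x \<in> exch_pairs S Y Z i (Suc i)" "exch_target S Y Z x = (P, Q)"
    unfolding exch_def by (auto dest: lincomb_nonzero_imp_target)
  then show "P \<in> ext_basis n (a + 1) \<and> Q \<in> ext_basis n (b - 1)"
    using exch_target_in_ext_basis[OF S_basis Y_basis Z_basis k_le_b] by fastforce
qed

end

theorem lemma5p2:
  fixes n a b k :: nat
  assumes "0 < k" and "k \<le> b" and "b \<le> a"
  shows "(gamma n a b k :: (nat set \<times> nat set \<times> nat set \<Rightarrow> 'k::field_char_0) \<Rightarrow> _)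
           ` tensor3 n a k (b - k)
         \<subseteq> theta1 n a b ` tensor2 n (a + 1) (b - 1)"
proof
  fix g assume "g \<in> (gamma n a b k :: (nat set \<times> nat set \<times> nat set \<Rightarrow> 'k) \<Rightarrow> _) ` tensor3 n a k (b - k)"
  then obtain x where g: "g = gamma n a b k x" by blast
  define pre where "pre = (\<lambda>p. \<Sum>S\<in>ext_basis n a. \<Sum>Y\<in>ext_basis n k. \<Sum>Z\<in>ext_basis n (b - k).
      x (S, Y, Z) * (gamma_preimage_b k S Y Z p :: 'k))"
  have basis: "basis_triple n a b k S Y Z"
    if "S \<in> ext_basis n a" "Y \<in> ext_basis n k" "Z \<in> ext_basis n (b - k)" for S Y Z
    using that assms(2) by (simp add: basis_triple_def)
  have "theta1 n a b pre = g"
    unfolding pre_def g gamma_def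
    by (rule ext) (simp add: theta1_sum theta1_scale ext_basis_finite basis_triple.theta1_gamma_preimage_b[OF basis])
  moreover have "pre \<in> tensor2 n (a + 1) (b - 1)"
    unfolding pre_def
    by (intro tensor2_sum tensor2_scale ext_basis_finite basis_triple.gamma_preimage_b_in_tensor2[OF basis])
  ultimately show "g \<in> theta1 n a b ` tensor2 n (a + 1) (b - 1)" by blast
qed

end
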